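(* Let $\mathcal E=\widetilde{\Omega^1_D}(\mathcal A)$ be the bimodule of one-forms of a spectral triple $(\mathcal A,\mathcal H,D)$. Then $\mathcal E$ satisfies Assumption III if and only if it satisfies Assumption III$'$.
   Context: $\mathcal E$ is the span in $B(\mathcal H)$ of $a[D,b]$; $\mathcal Z(\mathcal E)=\{e:ea=ae\ \forall a\in\mathcal A\}$, $\mathcal Z(\mathcal A)$ the center of $\mathcal A$. Assumption III: $\mathcal Z(\mathcal E)$ is finitely generated projective over $\mathcal Z(\mathcal A)$ and $\mathcal Z(\mathcal E)\otimes_{\mathcal Z(\mathcal A)}\mathcal A\to\mathcal E$, $e\otimes a\mapsto ea$, is a vector space isomorphism. Assumption III$'$: there exist a unital $*$-subalgebra $\mathcal A'\subseteq\mathcal Z(\mathcal A)$ and an $\mathcal A'$-submodule $\mathcal E'\subseteq\mathcal Z(\mathcal E)$, finitely generated projective over $\mathcal A'$, such that $\mathcal E'\otimes_{\mathcal A'}\mathcal A\to\mathcal E$, $e\otimes a\mapsto ea$, is a vector space isomorphism. *)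

theory Defs
  imports Complex_Main
begin

text \<open>Abstract ambient complex *-algebra (playing the role of B(H)):
  a unital ring 'b with a central unital ring homomorphism sc from the complex
  numbers (scalar multiplication is x \<mapsto> sc c * x) and an involution st.\<close>

definition cstar_alg :: "(complex \<Rightarrow> 'b::ring_1) \<Rightarrow> ('b \<Rightarrow> 'b) \<Rightarrow> bool" where
  "cstar_alg sc st \<longleftrightarrow>
     sc 1 = 1 \<and> (\<forall>c d. sc (c + d) = sc c + sc d) \<and> (\<forall>c d. sc (c * d) = sc c * sc d)
   \<and> (\<forall>c x. sc c * x = x * sc c)
   \<and> (\<forall>x y. st (x + y) = st x + st y) \<and> (\<forall>x y. st (x * y) = st y * st x)
   \<and> (\<forall>x. st (st x) = x) \<and> (\<forall>c. st (sc c) = sc (cnj c))"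

definition unital_star_subalg :: "(complex \<Rightarrow> 'b::ring_1) \<Rightarrow> ('b \<Rightarrow> 'b) \<Rightarrow> 'b set \<Rightarrow> bool" where
  "unital_star_subalg sc st S \<longleftrightarrow>
     1 \<in> S \<and> (\<forall>x\<in>S. \<forall>y\<in>S. x + y \<in> S \<and> x * y \<in> S)
   \<and> (\<forall>c. \<forall>x\<in>S. sc c * x \<in> S) \<and> (\<forall>x\<in>S. st x \<in> S)"

text \<open>The map b \<mapsto> [D,b]: a complex-linear derivation from A into the ambient algebra.\<close>
definition derivation_on :: "(complex \<Rightarrow> 'b::ring_1) \<Rightarrow> 'b set \<Rightarrow> ('b \<Rightarrow> 'b) \<Rightarrow> bool" where
  "derivation_on sc A d \<longleftrightarrow>
     (\<forall>a\<in>A. \<forall>b\<in>A. d (a + b) = d a + d b \<and> d (a * b) = a * d b + d a * b)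
   \<and> (\<forall>c. \<forall>a\<in>A. d (sc c * a) = sc c * d a)"

inductive_set cspan :: "(complex \<Rightarrow> 'b::ring_1) \<Rightarrow> 'b set \<Rightarrow> 'b set"
  for sc :: "complex \<Rightarrow> 'b" and G :: "'b set" where
  cspan_zero: "0 \<in> cspan sc G"
| cspan_gen: "g \<in> G \<Longrightarrow> g \<in> cspan sc G"
| cspan_add: "x \<in> cspan sc G \<Longrightarrow> y \<in> cspan sc G \<Longrightarrow> x + y \<in> cspan sc G"
| cspan_scale: "x \<in> cspan sc G \<Longrightarrow> sc c * x \<in> cspan sc G"

definition one_forms :: "(complex \<Rightarrow> 'b::ring_1) \<Rightarrow> 'b set \<Rightarrow> ('b \<Rightarrow> 'b) \<Rightarrow> 'b set" where
  "one_forms sc A d = cspan sc {a * d b | a b. a \<in> A \<and> b \<in> A}"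

definition center_mod :: "'b::ring_1 set \<Rightarrow> 'b set \<Rightarrow> 'b set" where
  "center_mod A E = {e \<in> E. \<forall>a\<in>A. e * a = a * e}"

abbreviation center :: "'b::ring_1 set \<Rightarrow> 'b set" where
  "center A \<equiv> center_mod A A"

definition submod :: "'b::ring_1 set \<Rightarrow> 'b set \<Rightarrow> bool" where
  "submod R M \<longleftrightarrow> 0 \<in> M \<and> (\<forall>x\<in>M. \<forall>y\<in>M. x + y \<in> M) \<and> (\<forall>x\<in>M. \<forall>r\<in>R. x * r \<in> M)"

text \<open>Finitely generated projective: an R-module which is a direct summand
  (retract, via R-linear maps) of the free module R^n for some n.\<close>
definition free_mod :: "'b::ring_1 set \<Rightarrow> nat \<Rightarrow> (nat \<Rightarrow> 'b) set" where
  "free_mod R n = {v. (\<forall>i. v i \<in> R) \<and> (\<forall>i\<ge>n. v i = 0)}"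

definition fg_proj :: "'b::ring_1 set \<Rightarrow> 'b set \<Rightarrow> bool" where
  "fg_proj R M \<longleftrightarrow> submod R M \<and>
     (\<exists>(n::nat) (\<iota>::'b \<Rightarrow> nat \<Rightarrow> 'b) (\<pi>::(nat \<Rightarrow> 'b) \<Rightarrow> 'b).
        (\<forall>x\<in>M. \<iota> x \<in> free_mod R n)
      \<and> (\<forall>x\<in>M. \<forall>y\<in>M. \<iota> (x + y) = (\<lambda>i. \<iota> x i + \<iota> y i))
      \<and> (\<forall>x\<in>M. \<forall>r\<in>R. \<iota> (x * r) = (\<lambda>i. \<iota> x i * r))
      \<and> (\<forall>v\<in>free_mod R n. \<pi> v \<in> M)
      \<and> (\<forall>v\<in>free_mod R n. \<forall>w\<in>free_mod R n. \<pi> (\<lambda>i. v i + w i) = \<pi> v + \<pi> w)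
      \<and> (\<forall>v\<in>free_mod R n. \<forall>r\<in>R. \<pi> (\<lambda>i. v i * r) = \<pi> v * r)
      \<and> (\<forall>x\<in>M. \<pi> (\<iota> x) = x))"

text \<open>Tensor product M \<otimes>_R N realised as the free abelian group on M \<times> N modulo
  the subgroup generated by the bilinearity and R-balancing relations.\<close>
definition free_ab :: "'b::ring_1 set \<Rightarrow> 'b set \<Rightarrow> ('b \<times> 'b \<Rightarrow> int) set" where
  "free_ab M N = {f. finite {p. f p \<noteq> 0} \<and> (\<forall>p. f p \<noteq> 0 \<longrightarrow> fst p \<in> M \<and> snd p \<in> N)}"

definition delta :: "'b \<times> 'b \<Rightarrow> 'b \<times> 'b \<Rightarrow> int" where
  "delta p = (\<lambda>q. if q = p then 1 else 0)"

definition tensor_gens :: "'b::ring_1 set \<Rightarrow> 'b set \<Rightarrow> 'b set \<Rightarrow> ('b \<times> 'b \<Rightarrow> int) set" where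
  "tensor_gens R M N =
     {(\<lambda>q. delta (m + m', n) q - delta (m, n) q - delta (m', n) q) | m m' n. m \<in> M \<and> m' \<in> M \<and> n \<in> N}
   \<union> {(\<lambda>q. delta (m, n + n') q - delta (m, n) q - delta (m, n') q) | m n n'. m \<in> M \<and> n \<in> N \<and> n' \<in> N}
   \<union> {(\<lambda>q. delta (m * r, n) q - delta (m, r * n) q) | m r n. m \<in> M \<and> r \<in> R \<and> n \<in> N}"

inductive_set tensor_rel :: "'b::ring_1 set \<Rightarrow> 'b set \<Rightarrow> 'b set \<Rightarrow> ('b \<times> 'b \<Rightarrow> int) set"
  for R M N :: "'b set" where
  tensor_rel_zero: "(\<lambda>q. 0) \<in> tensor_rel R M N"
| tensor_rel_gen: "g \<in> tensor_gens R M N \<Longrightarrow> g \<in> tensor_rel R M N"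
| tensor_rel_diff: "f \<in> tensor_rel R M N \<Longrightarrow> g \<in> tensor_rel R M N \<Longrightarrow> (\<lambda>q. f q - g q) \<in> tensor_rel R M N"

definition mult_eval :: "('b \<times> 'b \<Rightarrow> int) \<Rightarrow> 'b::ring_1" where
  "mult_eval f = (\<Sum>p\<in>{p. f p \<noteq> 0}. of_int (f p) * (fst p * snd p))"

text \<open>The map M \<otimes>_R N \<rightarrow> E, m \<otimes> n \<mapsto> m n, is a (well-defined, valued in E) bijection.\<close>
definition mult_tensor_iso :: "'b::ring_1 set \<Rightarrow> 'b set \<Rightarrow> 'b set \<Rightarrow> 'b set \<Rightarrow> bool" where
  "mult_tensor_iso R M N E \<longleftrightarrow>
     (\<forall>m\<in>M. \<forall>n\<in>N. m * n \<in> E)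
   \<and> (\<forall>x\<in>E. \<exists>f\<in>free_ab M N. mult_eval f = x)
   \<and> (\<forall>f\<in>free_ab M N. mult_eval f = 0 \<longrightarrow> f \<in> tensor_rel R M N)"

definition assumption_III :: "'b::ring_1 set \<Rightarrow> 'b set \<Rightarrow> bool" where
  "assumption_III A E \<longleftrightarrow>
     fg_proj (center A) (center_mod A E) \<and> mult_tensor_iso (center A) (center_mod A E) A E"

definition assumption_III' :: "(complex \<Rightarrow> 'b::ring_1) \<Rightarrow> ('b \<Rightarrow> 'b) \<Rightarrow> 'b set \<Rightarrow> 'b set \<Rightarrow> bool" where
  "assumption_III' sc st A E \<longleftrightarrow>
     (\<exists>A' E'. unital_star_subalg sc st A' \<and> A' \<subseteq> center A
        \<and> E' \<subseteq> center_mod A E \<and> submod A' E' \<and> fg_proj A' E'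
        \<and> mult_tensor_iso A' E' A E)"

end

theory Submission
  imports Defs
begin

text \<open>Assumption III gives III' with \<open>A' = Z(A)\<close> and \<open>E' = Z(E)\<close>, the centre being a unital
  *-subalgebra. Conversely, let \<open>E \<cong> E' \<otimes>\<^bsub>A'\<^esub> A\<close> with \<open>E'\<close> a direct summand of \<open>A'\<^sup>n\<close>
  via \<open>\<iota>, \<pi>\<close>. The frame \<open>b\<^sub>i = \<pi>(e\<^sub>i)\<close> and the coordinates \<open>\<phi>\<^sub>i(m \<otimes> a) = \<iota>(m)\<^sub>i a\<close>, well defined
  on the tensor product, give \<open>x = \<Sum> b\<^sub>i \<phi>\<^sub>i(x)\<close> for all \<open>x \<in> E\<close>. Since \<open>A'\<close> and \<open>E'\<close> are central,
  every \<open>\<phi>\<^sub>i\<close> is an A-bimodule map, so it sends \<open>Z(E)\<close> into \<open>Z(A)\<close>; hence \<open>(b\<^sub>i, \<phi>\<^sub>i)\<close> is a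
  projective basis of \<open>Z(E)\<close> over \<open>Z(A)\<close>, and \<open>\<Sum> m\<^sub>k \<otimes> a\<^sub>k \<equiv> \<Sum> b\<^sub>i \<otimes> \<phi>\<^sub>i(\<Sum> m\<^sub>k a\<^sub>k)\<close> in
  \<open>Z(E) \<otimes>\<^bsub>Z(A)\<^esub> A\<close> shows that multiplication \<open>Z(E) \<otimes>\<^bsub>Z(A)\<^esub> A \<rightarrow> E\<close> is injective.\<close>

section \<open>Finitely supported integer combinations\<close>

definition finite_support :: "('p \<Rightarrow> int) \<Rightarrow> bool" where
  "finite_support f \<longleftrightarrow> finite {p. f p \<noteq> 0}"

definition int_comb :: "('p \<Rightarrow> 'c::ring_1) \<Rightarrow> ('p \<Rightarrow> int) \<Rightarrow> 'c" where
  "int_comb g f = (\<Sum>p\<in>{p. f p \<noteq> 0}. of_int (f p) * g p)"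

lemma mult_eval_eq_int_comb: "mult_eval f = int_comb (\<lambda>p. fst p * snd p) f"
  unfolding mult_eval_def int_comb_def ..

lemma finite_support_zero: "finite_support (\<lambda>q. 0)"
  unfolding finite_support_def by simp

lemma finite_support_delta: "finite_support (delta p)"
  unfolding finite_support_def delta_def by (rule finite_subset[of _ "{p}"]) auto

lemma finite_support_add: "finite_support f \<Longrightarrow> finite_support g \<Longrightarrow> finite_support (\<lambda>q. f q + g q)"
  unfolding finite_support_def by (rule finite_subset[of _ "{p. f p \<noteq> 0} \<union> {p. g p \<noteq> 0}"]) auto

lemma finite_support_diff: "finite_support f \<Longrightarrow> finite_support g \<Longrightarrow> finite_support (\<lambda>q. f q - g q)"
  unfolding finite_support_def by (rule finite_subset[of _ "{p. f p \<noteq> 0} \<union> {p. g p \<noteq> 0}"]) auto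

lemma finite_support_scale: "finite_support f \<Longrightarrow> finite_support (\<lambda>q. k * f q)"
  unfolding finite_support_def by (rule finite_subset[of _ "{p. f p \<noteq> 0}"]) auto

lemma finite_support_sum:
  assumes "finite I" "\<forall>i\<in>I. finite_support (F i)"
  shows "finite_support (\<lambda>q. \<Sum>i\<in>I. F i q)"
  unfolding finite_support_def
proof (rule finite_subset[of _ "\<Union>i\<in>I. {p. F i p \<noteq> 0}"])
  show "{p. (\<Sum>i\<in>I. F i p) \<noteq> 0} \<subseteq> (\<Union>i\<in>I. {p. F i p \<noteq> 0})"
    by (auto elim: sum.not_neutral_contains_not_neutral)
  show "finite (\<Union>i\<in>I. {p. F i p \<noteq> 0})"
    using assms unfolding finite_support_def by auto
qed

lemma finite_support_delta_comb: "finite I \<Longrightarrow> finite_support (\<lambda>q. \<Sum>i\<in>I. c i * delta (h i) q)"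
  by (simp add: finite_support_sum finite_support_scale finite_support_delta)

lemma delta_comb_nonzero:
  assumes "(\<Sum>i\<in>I. c i * delta (h i) q) \<noteq> 0"
  obtains i where "i \<in> I" "q = h i"
proof -
  obtain i where "i \<in> I" "c i * delta (h i) q \<noteq> 0"
    using assms by (auto elim: sum.not_neutral_contains_not_neutral)
  then show ?thesis using that by (auto simp: delta_def split: if_splits)
qed

lemma int_comb_superset:
  assumes "finite S" "{p. f p \<noteq> 0} \<subseteq> S"
  shows "int_comb g f = (\<Sum>p\<in>S. of_int (f p) * g p)"
  unfolding int_comb_def by (rule sum.mono_neutral_left) (use assms in auto)

lemma int_comb_cong: "(\<And>p. f p \<noteq> 0 \<Longrightarrow> g p = g' p) \<Longrightarrow> int_comb g f = int_comb g' f"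
  unfolding int_comb_def by (rule sum.cong) auto

lemma int_comb_zero: "int_comb g (\<lambda>q. 0) = 0"
  by (simp add: int_comb_def)

lemma int_comb_zero_fun: "int_comb (\<lambda>p. 0) f = 0"
  by (simp add: int_comb_def)

lemma int_comb_delta: "int_comb g (delta p) = g p"
proof -
  have "{q. delta p q \<noteq> 0} = {p}" by (auto simp: delta_def)
  then show ?thesis by (simp add: int_comb_def delta_def)
qed

lemma int_comb_mult_right: "int_comb (\<lambda>p. g p * a) f = int_comb g f * a"
  unfolding int_comb_def by (simp add: sum_distrib_right mult.assoc)

lemma of_int_mult_left_commute: "of_int k * (a * y) = a * (of_int k * (y::'a::ring_1))"
  by (metis mult.assoc mult_of_int_commute)

lemma int_comb_mult_left: "int_comb (\<lambda>p. a * g p) f = a * int_comb g f"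
  unfolding int_comb_def by (simp add: sum_distrib_left of_int_mult_left_commute)

lemma int_comb_add:
  assumes "finite_support f" "finite_support h"
  shows "int_comb g (\<lambda>q. f q + h q) = int_comb g f + int_comb g h"
proof -
  let ?S = "{p. f p \<noteq> 0} \<union> {p. h p \<noteq> 0}"
  have fin: "finite ?S" using assms unfolding finite_support_def by auto
  have "int_comb g (\<lambda>q. f q + h q) = (\<Sum>p\<in>?S. of_int (f p + h p) * g p)"
    by (rule int_comb_superset[OF fin]) auto
  also have "\<dots> = (\<Sum>p\<in>?S. of_int (f p) * g p) + (\<Sum>p\<in>?S. of_int (h p) * g p)"
    by (simp add: sum.distrib distrib_right)
  also have "\<dots> = int_comb g f + int_comb g h"
    using fin by (simp add: int_comb_superset[of ?S])
  finally show ?thesis .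
qed

lemma int_comb_diff:
  assumes "finite_support f" "finite_support h"
  shows "int_comb g (\<lambda>q. f q - h q) = int_comb g f - int_comb g h"
proof -
  let ?S = "{p. f p \<noteq> 0} \<union> {p. h p \<noteq> 0}"
  have fin: "finite ?S" using assms unfolding finite_support_def by auto
  have "int_comb g (\<lambda>q. f q - h q) = (\<Sum>p\<in>?S. of_int (f p - h p) * g p)"
    by (rule int_comb_superset[OF fin]) auto
  also have "\<dots> = (\<Sum>p\<in>?S. of_int (f p) * g p) - (\<Sum>p\<in>?S. of_int (h p) * g p)"
    by (simp add: sum_subtractf left_diff_distrib)
  also have "\<dots> = int_comb g f - int_comb g h"
    using fin by (simp add: int_comb_superset[of ?S])
  finally show ?thesis .
qed

lemma int_comb_scale:
  assumes "finite_support f"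
  shows "int_comb g (\<lambda>q. k * f q) = of_int k * int_comb g f"
proof -
  have fin: "finite {p. f p \<noteq> 0}" using assms unfolding finite_support_def .
  have "int_comb g (\<lambda>q. k * f q) = (\<Sum>p\<in>{p. f p \<noteq> 0}. of_int (k * f p) * g p)"
    by (rule int_comb_superset[OF fin]) auto
  also have "\<dots> = of_int k * int_comb g f"
    by (simp add: int_comb_def sum_distrib_left mult.assoc)
  finally show ?thesis .
qed

lemma int_comb_sum:
  assumes "finite I" "\<forall>i\<in>I. finite_support (F i)"
  shows "int_comb g (\<lambda>q. \<Sum>i\<in>I. F i q) = (\<Sum>i\<in>I. int_comb g (F i))"
proof -
  let ?S = "\<Union>i\<in>I. {p. F i p \<noteq> 0}"
  have fin: "finite ?S" using assms unfolding finite_support_def by auto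
  have "int_comb g (\<lambda>q. \<Sum>i\<in>I. F i q) = (\<Sum>p\<in>?S. of_int (\<Sum>i\<in>I. F i p) * g p)"
    by (rule int_comb_superset[OF fin]) (auto elim: sum.not_neutral_contains_not_neutral)
  also have "\<dots> = (\<Sum>p\<in>?S. \<Sum>i\<in>I. of_int (F i p) * g p)"
    by (simp add: sum_distrib_right)
  also have "\<dots> = (\<Sum>i\<in>I. \<Sum>p\<in>?S. of_int (F i p) * g p)"
    by (rule sum.swap)
  also have "\<dots> = (\<Sum>i\<in>I. int_comb g (F i))"
    by (rule sum.cong[OF refl], rule int_comb_superset[symmetric]) (use fin assms in auto)
  finally show ?thesis .
qed

lemma int_comb_delta_comb:
  "finite I \<Longrightarrow> int_comb g (\<lambda>q. \<Sum>i\<in>I. c i * delta (h i) q) = (\<Sum>i\<in>I. of_int (c i) * g (h i))"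
  by (simp add: int_comb_sum finite_support_scale finite_support_delta int_comb_scale int_comb_delta)

lemma int_comb_push:
  assumes "finite_support f"
  shows "int_comb g (\<lambda>q. \<Sum>p\<in>{p. f p \<noteq> 0}. f p * delta (h p) q) = int_comb (\<lambda>p. g (h p)) f"
  using int_comb_delta_comb[of "{p. f p \<noteq> 0}" g f h] assms
  unfolding finite_support_def int_comb_def[of "\<lambda>p. g (h p)"] by simp

lemma free_ab_finite_support: "f \<in> free_ab M N \<Longrightarrow> finite_support f"
  unfolding free_ab_def finite_support_def by blast

lemma free_ab_mem: "f \<in> free_ab M N \<Longrightarrow> f p \<noteq> 0 \<Longrightarrow> fst p \<in> M \<and> snd p \<in> N"
  unfolding free_ab_def by blast

lemma free_abI:
  "finite_support f \<Longrightarrow> (\<And>p. f p \<noteq> 0 \<Longrightarrow> fst p \<in> M \<and> snd p \<in> N) \<Longrightarrow> f \<in> free_ab M N"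
  unfolding free_ab_def finite_support_def by blast

lemma free_ab_add:
  assumes "f \<in> free_ab M N" "g \<in> free_ab M N"
  shows "(\<lambda>q. f q + g q) \<in> free_ab M N"
proof (rule free_abI)
  show "finite_support (\<lambda>q. f q + g q)"
    using assms by (intro finite_support_add free_ab_finite_support)
  fix p assume "f p + g p \<noteq> 0"
  then have "f p \<noteq> 0 \<or> g p \<noteq> 0" by auto
  then show "fst p \<in> M \<and> snd p \<in> N"
    using free_ab_mem[OF assms(1)] free_ab_mem[OF assms(2)] by blast
qed

lemma free_ab_diff:
  assumes "f \<in> free_ab M N" "g \<in> free_ab M N"
  shows "(\<lambda>q. f q - g q) \<in> free_ab M N"
proof (rule free_abI)
  show "finite_support (\<lambda>q. f q - g q)"
    using assms by (intro finite_support_diff free_ab_finite_support)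
  fix p assume "f p - g p \<noteq> 0"
  then have "f p \<noteq> 0 \<or> g p \<noteq> 0" by auto
  then show "fst p \<in> M \<and> snd p \<in> N"
    using free_ab_mem[OF assms(1)] free_ab_mem[OF assms(2)] by blast
qed

lemma free_ab_push:
  assumes f: "f \<in> free_ab M N"
    and h: "\<And>p. fst p \<in> M \<Longrightarrow> snd p \<in> N \<Longrightarrow> fst (h p) \<in> M' \<and> snd (h p) \<in> N'"
  shows "(\<lambda>q. \<Sum>p\<in>{p. f p \<noteq> 0}. f p * delta (h p) q) \<in> free_ab M' N'"
proof (rule free_abI)
  have fin: "finite {p. f p \<noteq> 0}"
    using free_ab_finite_support[OF f] unfolding finite_support_def .
  then show "finite_support (\<lambda>q. \<Sum>p\<in>{p. f p \<noteq> 0}. f p * delta (h p) q)"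
    by (rule finite_support_delta_comb)
  fix q assume "(\<Sum>p\<in>{p. f p \<noteq> 0}. f p * delta (h p) q) \<noteq> 0"
  then obtain p where "p \<in> {p. f p \<noteq> 0}" "q = h p" by (rule delta_comb_nonzero)
  with free_ab_mem[OF f] h show "fst q \<in> M' \<and> snd q \<in> N'" by blast
qed

section \<open>The tensor relation\<close>

lemma tensor_rel_add_left:
  "m \<in> M \<Longrightarrow> m' \<in> M \<Longrightarrow> n \<in> N \<Longrightarrow>
    (\<lambda>q. delta (m + m', n) q - delta (m, n) q - delta (m', n) q) \<in> tensor_rel R M N"
  by (rule tensor_rel_gen) (unfold tensor_gens_def, blast)

lemma tensor_rel_add_right:
  "m \<in> M \<Longrightarrow> n \<in> N \<Longrightarrow> n' \<in> N \<Longrightarrow>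
    (\<lambda>q. delta (m, n + n') q - delta (m, n) q - delta (m, n') q) \<in> tensor_rel R M N"
  by (rule tensor_rel_gen) (unfold tensor_gens_def, blast)

lemma tensor_rel_balanced:
  "m \<in> M \<Longrightarrow> r \<in> R \<Longrightarrow> n \<in> N \<Longrightarrow> (\<lambda>q. delta (m * r, n) q - delta (m, r * n) q) \<in> tensor_rel R M N"
  by (rule tensor_rel_gen) (unfold tensor_gens_def, blast)

lemma tensor_rel_finite_support: "f \<in> tensor_rel R M N \<Longrightarrow> finite_support f"
proof (induct rule: tensor_rel.induct)
  case tensor_rel_zero
  then show ?case by (rule finite_support_zero)
next
  case (tensor_rel_gen g)
  then show ?case unfolding tensor_gens_def by (auto intro!: finite_support_diff finite_support_delta)
next
  case (tensor_rel_diff f g)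
  then show ?case by (simp add: finite_support_diff)
qed

lemma int_comb_tensor_rel:
  assumes "f \<in> tensor_rel R M N"
    and "\<And>m m' n. m \<in> M \<Longrightarrow> m' \<in> M \<Longrightarrow> n \<in> N \<Longrightarrow> g (m + m', n) = g (m, n) + g (m', n)"
    and "\<And>m n n'. m \<in> M \<Longrightarrow> n \<in> N \<Longrightarrow> n' \<in> N \<Longrightarrow> g (m, n + n') = g (m, n) + g (m, n')"
    and "\<And>m r n. m \<in> M \<Longrightarrow> r \<in> R \<Longrightarrow> n \<in> N \<Longrightarrow> g (m * r, n) = g (m, r * n)"
  shows "int_comb g f = 0"
  using assms(1)
proof (induct rule: tensor_rel.induct)
  case tensor_rel_zero
  then show ?case by (rule int_comb_zero)
next
  case (tensor_rel_gen f)
  then show ?case unfolding tensor_gens_def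
    by (auto simp: int_comb_diff finite_support_diff finite_support_delta int_comb_delta assms(2-4))
next
  case (tensor_rel_diff f g)
  then show ?case by (simp add: int_comb_diff tensor_rel_finite_support)
qed

lemma tensor_rel_uminus: "f \<in> tensor_rel R M N \<Longrightarrow> (\<lambda>q. - f q) \<in> tensor_rel R M N"
  using tensor_rel_diff[OF tensor_rel_zero, of f R M N] by simp

lemma tensor_rel_add:
  "f \<in> tensor_rel R M N \<Longrightarrow> g \<in> tensor_rel R M N \<Longrightarrow> (\<lambda>q. f q + g q) \<in> tensor_rel R M N"
  using tensor_rel_diff[of f R M N "\<lambda>q. - g q"] tensor_rel_uminus[of g] by simp

lemma tensor_rel_sum:
  "finite I \<Longrightarrow> \<forall>i\<in>I. F i \<in> tensor_rel R M N \<Longrightarrow> (\<lambda>q. \<Sum>i\<in>I. F i q) \<in> tensor_rel R M N"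
  by (induct I rule: finite_induct) (simp_all add: tensor_rel_zero tensor_rel_add)

lemma tensor_rel_delta_zero_right: "m \<in> M \<Longrightarrow> 0 \<in> N \<Longrightarrow> delta (m, 0) \<in> tensor_rel R M N"
  using tensor_rel_uminus[OF tensor_rel_add_right[of m M 0 N 0 R]] by simp

definition tensor_equiv :: "'b::ring_1 set \<Rightarrow> 'b set \<Rightarrow> 'b set \<Rightarrow> ('b \<times> 'b \<Rightarrow> int) \<Rightarrow> ('b \<times> 'b \<Rightarrow> int) \<Rightarrow> bool"
  where "tensor_equiv R M N f g \<longleftrightarrow> (\<lambda>q. f q - g q) \<in> tensor_rel R M N"

lemma tensor_rel_iff_equiv_zero: "f \<in> tensor_rel R M N \<longleftrightarrow> tensor_equiv R M N f (\<lambda>q. 0)"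
  unfolding tensor_equiv_def by simp

lemma tensor_equiv_sym: "tensor_equiv R M N f g \<Longrightarrow> tensor_equiv R M N g f"
  unfolding tensor_equiv_def using tensor_rel_uminus by fastforce

lemma tensor_equiv_trans:
  "tensor_equiv R M N f g \<Longrightarrow> tensor_equiv R M N g h \<Longrightarrow> tensor_equiv R M N f h"
  unfolding tensor_equiv_def using tensor_rel_add by fastforce

lemma tensor_equiv_sum:
  "finite I \<Longrightarrow> \<forall>i\<in>I. tensor_equiv R M N (F i) (G i) \<Longrightarrow>
    tensor_equiv R M N (\<lambda>q. \<Sum>i\<in>I. F i q) (\<lambda>q. \<Sum>i\<in>I. G i q)"
  unfolding tensor_equiv_def using tensor_rel_sum[of I "\<lambda>i q. F i q - G i q"]
  by (simp add: sum_subtractf)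

lemma tensor_equiv_balanced:
  "m \<in> M \<Longrightarrow> r \<in> R \<Longrightarrow> n \<in> N \<Longrightarrow> tensor_equiv R M N (delta (m * r, n)) (delta (m, r * n))"
  unfolding tensor_equiv_def by (rule tensor_rel_balanced)

lemma tensor_equiv_delta_sum_left:
  assumes "finite S" "0 \<in> M" "\<And>x y. x \<in> M \<Longrightarrow> y \<in> M \<Longrightarrow> x + y \<in> M"
    and "\<forall>i\<in>S. x i \<in> M" "n \<in> N"
  shows "tensor_equiv R M N (delta (\<Sum>i\<in>S. x i, n)) (\<lambda>q. \<Sum>i\<in>S. delta (x i, n) q)"
  using assms(1,4)
proof (induct S rule: finite_induct)
  case empty
  then show ?case
    using tensor_rel_uminus[OF tensor_rel_add_left[of 0 M 0 n N R]] assms(2,5)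
    by (simp add: tensor_rel_iff_equiv_zero[symmetric])
next
  case (insert k S)
  have "(\<Sum>i\<in>S. x i) \<in> M"
    using insert(1,4) assms(2,3) by (induct S rule: finite_induct) auto
  then have "tensor_equiv R M N (delta (x k + (\<Sum>i\<in>S. x i), n))
      (\<lambda>q. delta (x k, n) q + delta (\<Sum>i\<in>S. x i, n) q)"
    using tensor_rel_add_left[of "x k" M "\<Sum>i\<in>S. x i" n N R] insert(4) assms(5)
    unfolding tensor_equiv_def by (simp add: algebra_simps)
  moreover have "tensor_equiv R M N (\<lambda>q. delta (x k, n) q + delta (\<Sum>i\<in>S. x i, n) q)
      (\<lambda>q. delta (x k, n) q + (\<Sum>i\<in>S. delta (x i, n) q))"
    using insert(3,4) unfolding tensor_equiv_def by simp
  ultimately show ?case using insert(1,2) by (simp add: tensor_equiv_trans)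
qed

lemma tensor_equiv_delta_sum_right:
  assumes "finite S" "0 \<in> N" "\<And>x y. x \<in> N \<Longrightarrow> y \<in> N \<Longrightarrow> x + y \<in> N"
    and "\<forall>i\<in>S. y i \<in> N" "m \<in> M"
  shows "tensor_equiv R M N (delta (m, \<Sum>i\<in>S. y i)) (\<lambda>q. \<Sum>i\<in>S. delta (m, y i) q)"
  using assms(1,4)
proof (induct S rule: finite_induct)
  case empty
  then show ?case
    using tensor_rel_delta_zero_right[OF assms(5,2)] by (simp add: tensor_rel_iff_equiv_zero[symmetric])
next
  case (insert k S)
  have "(\<Sum>i\<in>S. y i) \<in> N"
    using insert(1,4) assms(2,3) by (induct S rule: finite_induct) auto
  then have "tensor_equiv R M N (delta (m, y k + (\<Sum>i\<in>S. y i)))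
      (\<lambda>q. delta (m, y k) q + delta (m, \<Sum>i\<in>S. y i) q)"
    using tensor_rel_add_right[of m M "y k" N "\<Sum>i\<in>S. y i" R] insert(4) assms(5)
    unfolding tensor_equiv_def by (simp add: algebra_simps)
  moreover have "tensor_equiv R M N (\<lambda>q. delta (m, y k) q + delta (m, \<Sum>i\<in>S. y i) q)
      (\<lambda>q. delta (m, y k) q + (\<Sum>i\<in>S. delta (m, y i) q))"
    using insert(3,4) unfolding tensor_equiv_def by simp
  ultimately show ?case using insert(1,2) by (simp add: tensor_equiv_trans)
qed

lemma tensor_equiv_delta_int_scale:
  assumes m: "m \<in> M" and N: "\<And>j::int. of_int j * c \<in> N"
  shows "tensor_equiv R M N (\<lambda>q. k * delta (m, c) q) (delta (m, of_int k * c))"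
  unfolding tensor_equiv_def
proof (induct k rule: int_induct[where k = 0])
  case base
  have "0 \<in> N" using N[of 0] by simp
  then show ?case using tensor_rel_uminus[OF tensor_rel_delta_zero_right[OF m]] by simp
next
  case (step1 i)
  have "(\<lambda>q. delta (m, of_int i * c + c) q - delta (m, of_int i * c) q - delta (m, c) q) \<in> tensor_rel R M N"
    using tensor_rel_add_right[OF m N[of i] N[of 1]] by simp
  from tensor_rel_diff[OF step1(2) this] show ?case
    by (simp add: algebra_simps)
next
  case (step2 i)
  have "(\<lambda>q. delta (m, of_int (i - 1) * c + c) q - delta (m, of_int (i - 1) * c) q - delta (m, c) q)
      \<in> tensor_rel R M N"
    using tensor_rel_add_right[OF m N[of "i - 1"] N[of 1]] by simp
  from tensor_rel_add[OF step2(2) this] show ?case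
    by (simp add: algebra_simps)
qed

section \<open>Subrings, centres and one-forms\<close>

lemma cstar_alg_sc_zero: "cstar_alg sc st \<Longrightarrow> sc 0 = 0"
proof -
  assume "cstar_alg sc st"
  then have "sc (0 + 0) = sc 0 + sc 0" unfolding cstar_alg_def by blast
  then show ?thesis by simp
qed

lemma cstar_alg_sc_minus_one: "cstar_alg sc st \<Longrightarrow> sc (-1) = -1"
proof -
  assume cs: "cstar_alg sc st"
  then have "sc (1 + -1) = sc 1 + sc (-1)" "sc 1 = 1" unfolding cstar_alg_def by blast+
  then have "sc 0 = 1 + sc (-1)" by simp
  then show ?thesis using cstar_alg_sc_zero[OF cs] by (simp add: eq_neg_iff_add_eq_0 add.commute)
qed

locale subring =
  fixes S :: "'b::ring_1 set"
  assumes one_mem: "1 \<in> S"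
    and add_mem: "x \<in> S \<Longrightarrow> y \<in> S \<Longrightarrow> x + y \<in> S"
    and mult_mem: "x \<in> S \<Longrightarrow> y \<in> S \<Longrightarrow> x * y \<in> S"
    and uminus_mem: "x \<in> S \<Longrightarrow> - x \<in> S"
begin

lemma zero_mem: "0 \<in> S"
  using add_mem[OF one_mem uminus_mem[OF one_mem]] by simp

lemma of_int_mem: "of_int k \<in> S"
proof (induct k rule: int_induct[where k = 0])
  case base
  show ?case by (simp add: zero_mem)
next
  case (step1 i)
  then show ?case using add_mem[OF _ one_mem] by simp
next
  case (step2 i)
  then show ?case using add_mem[OF _ uminus_mem[OF one_mem]] by simp
qed
lemma of_int_mult_mem: "x \<in> S \<Longrightarrow> of_int k * x \<in> S"
  by (rule mult_mem[OF of_int_mem])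

lemma sum_mem: "finite I \<Longrightarrow> \<forall>i\<in>I. F i \<in> S \<Longrightarrow> sum F I \<in> S"
  by (induct I rule: finite_induct) (simp_all add: zero_mem add_mem)

end

lemma unital_star_subalg_subring:
  assumes cs: "cstar_alg sc st" and S: "unital_star_subalg sc st S"
  shows "subring S"
proof
  fix x assume "x \<in> S"
  then have "sc (-1) * x \<in> S" using S unfolding unital_star_subalg_def by blast
  then show "- x \<in> S" by (simp add: cstar_alg_sc_minus_one[OF cs])
qed (use S in \<open>simp_all add: unital_star_subalg_def\<close>)

lemma center_modI: "x \<in> E \<Longrightarrow> (\<And>a. a \<in> A \<Longrightarrow> x * a = a * x) \<Longrightarrow> x \<in> center_mod A E"
  unfolding center_mod_def by blast

lemma center_modD:
  assumes "x \<in> center_mod A E"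
  shows "x \<in> E" and "a \<in> A \<Longrightarrow> x * a = a * x"
  using assms unfolding center_mod_def by blast+

lemma center_unital_star_subalg:
  assumes cs: "cstar_alg sc st" and A: "unital_star_subalg sc st A"
  shows "unital_star_subalg sc st (center A)"
proof -
  interpret A: subring A by (rule unital_star_subalg_subring[OF cs A])
  have "x + y \<in> center A" "x * y \<in> center A"
    if x: "x \<in> center A" and y: "y \<in> center A" for x y
  proof -
    note xA = center_modD[OF x] and yA = center_modD[OF y]
    show "x + y \<in> center A"
      by (rule center_modI) (simp_all add: A.add_mem[OF xA(1) yA(1)] xA(2) yA(2) distrib_left distrib_right)
    show "x * y \<in> center A"
    proof (rule center_modI)
      fix a assume a: "a \<in> A"
      have "x * y * a = x * a * y" by (simp add: mult.assoc yA(2)[OF a])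
      then show "x * y * a = a * (x * y)" by (simp add: mult.assoc[symmetric] xA(2)[OF a])
    qed (rule A.mult_mem[OF xA(1) yA(1)])
  qed
  moreover have "sc c * x \<in> center A" if x: "x \<in> center A" for c x
  proof (rule center_modI)
    show "sc c * x \<in> A" using A center_modD(1)[OF x] unfolding unital_star_subalg_def by blast
    fix a assume a: "a \<in> A"
    have "sc c * a = a * sc c" using cs unfolding cstar_alg_def by blast
    have "sc c * x * a = sc c * a * x" by (simp add: mult.assoc center_modD(2)[OF x a])
    also have "\<dots> = a * (sc c * x)" by (simp add: \<open>sc c * a = a * sc c\<close> mult.assoc)
    finally show "sc c * x * a = a * (sc c * x)" .
  qed
  moreover have "st x \<in> center A" if x: "x \<in> center A" for x
  proof (rule center_modI)
    show "st x \<in> A" using A center_modD(1)[OF x] unfolding unital_star_subalg_def by blast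
    fix a assume "a \<in> A"
    then have "st a \<in> A" using A unfolding unital_star_subalg_def by blast
    have mult: "st (u * v) = st v * st u" and inv: "st (st u) = u" for u v
      using cs unfolding cstar_alg_def by blast+
    have "st x * a = st (st a * x)" by (simp add: mult inv)
    also have "st a * x = x * st a" using center_modD(2)[OF x \<open>st a \<in> A\<close>] by simp
    also have "st (x * st a) = a * st x" by (simp add: mult inv)
    finally show "st x * a = a * st x" .
  qed
  ultimately show ?thesis
    unfolding unital_star_subalg_def by (simp add: A.one_mem center_modI)
qed

locale right_submodule = A: subring A for A :: "'b::ring_1 set" +
  fixes E :: "'b set"
  assumes zero_mem_E: "0 \<in> E"
    and add_mem_E: "x \<in> E \<Longrightarrow> y \<in> E \<Longrightarrow> x + y \<in> E"
    and mult_right_mem_E: "x \<in> E \<Longrightarrow> a \<in> A \<Longrightarrow> x * a \<in> E"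
begin

lemma sum_mem_E: "finite I \<Longrightarrow> \<forall>i\<in>I. F i \<in> E \<Longrightarrow> sum F I \<in> E"
  by (induct I rule: finite_induct) (simp_all add: zero_mem_E add_mem_E)

lemma center_mod_zero: "0 \<in> center_mod A E"
  by (simp add: center_modI zero_mem_E)

lemma center_mod_add:
  assumes x: "x \<in> center_mod A E" and y: "y \<in> center_mod A E"
  shows "x + y \<in> center_mod A E"
  using center_modD[OF x] center_modD[OF y]
  by (intro center_modI) (simp_all add: add_mem_E distrib_left distrib_right)

lemma center_mod_mult_center:
  assumes x: "x \<in> center_mod A E" and r: "r \<in> center A"
  shows "x * r \<in> center_mod A E"
proof (rule center_modI)
  show "x * r \<in> E" by (rule mult_right_mem_E[OF center_modD(1)[OF x] center_modD(1)[OF r]])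
  fix a assume a: "a \<in> A"
  have "x * r * a = x * a * r" by (simp add: mult.assoc center_modD(2)[OF r a])
  also have "\<dots> = a * (x * r)" by (simp add: mult.assoc center_modD(2)[OF x a])
  finally show "x * r * a = a * (x * r)" .
qed

lemma center_mod_sum: "finite I \<Longrightarrow> \<forall>i\<in>I. F i \<in> center_mod A E \<Longrightarrow> sum F I \<in> center_mod A E"
  by (induct I rule: finite_induct) (simp_all add: center_mod_zero center_mod_add)

lemma submod_center_mod: "submod (center A) (center_mod A E)"
  unfolding submod_def by (simp add: center_mod_zero center_mod_add center_mod_mult_center)

end

lemma one_forms_right_submodule:
  assumes cs: "cstar_alg sc st" and A: "unital_star_subalg sc st A" and d: "derivation_on sc A d"
  shows "right_submodule A (one_forms sc A d)"
proof -
  interpret A: subring A by (rule unital_star_subalg_subring[OF cs A])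
  let ?G = "{a * d b |a b. a \<in> A \<and> b \<in> A}"
  have "x * a \<in> cspan sc ?G" if "x \<in> cspan sc ?G" "a \<in> A" for x a
    using that(1)
  proof (induct rule: cspan.induct)
    case (cspan_gen g)
    then obtain a1 b1 where g: "g = a1 * d b1" "a1 \<in> A" "b1 \<in> A" by blast
    \<comment> \<open>Leibniz rule: \<open>a1 [D,b1] a = a1 [D,b1 a] - a1 b1 [D,a]\<close>\<close>
    have "d (b1 * a) = b1 * d a + d b1 * a"
      using d g(3) \<open>a \<in> A\<close> unfolding derivation_on_def by blast
    then have "g * a = a1 * d (b1 * a) + sc (-1) * ((a1 * b1) * d a)"
      unfolding g(1) cstar_alg_sc_minus_one[OF cs] by (simp add: algebra_simps)
    moreover have "a1 * d (b1 * a) \<in> ?G" "(a1 * b1) * d a \<in> ?G"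
      using g \<open>a \<in> A\<close> A.mult_mem by blast+
    ultimately show ?case by (simp add: cspan.intros)
  qed (simp_all add: cspan.intros distrib_right mult.assoc)
  then show ?thesis
    by unfold_locales (simp_all add: one_forms_def cspan.intros)
qed

section \<open>Base change along a central projective module\<close>

locale central_base_change = right_submodule A E + A': subring A'
  for A E A' :: "'b::ring_1 set" +
  fixes E' :: "'b set" and n :: nat and \<iota> :: "'b \<Rightarrow> nat \<Rightarrow> 'b" and \<pi> :: "(nat \<Rightarrow> 'b) \<Rightarrow> 'b"
  assumes A'_central: "A' \<subseteq> center A"
    and E'_central: "E' \<subseteq> center_mod A E"
    and \<iota>_mem: "x \<in> E' \<Longrightarrow> \<iota> x \<in> free_mod A' n"
    and \<iota>_add: "x \<in> E' \<Longrightarrow> y \<in> E' \<Longrightarrow> \<iota> (x + y) = (\<lambda>i. \<iota> x i + \<iota> y i)"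
    and \<iota>_mult: "x \<in> E' \<Longrightarrow> r \<in> A' \<Longrightarrow> \<iota> (x * r) = (\<lambda>i. \<iota> x i * r)"
    and \<pi>_mem: "v \<in> free_mod A' n \<Longrightarrow> \<pi> v \<in> E'"
    and \<pi>_add: "v \<in> free_mod A' n \<Longrightarrow> w \<in> free_mod A' n \<Longrightarrow> \<pi> (\<lambda>i. v i + w i) = \<pi> v + \<pi> w"
    and \<pi>_mult: "v \<in> free_mod A' n \<Longrightarrow> r \<in> A' \<Longrightarrow> \<pi> (\<lambda>i. v i * r) = \<pi> v * r"
    and \<pi>_\<iota>: "x \<in> E' \<Longrightarrow> \<pi> (\<iota> x) = x"
    and base_change_iso: "mult_tensor_iso A' E' A E"
begin

lemma \<iota>_coeff_mem: "m \<in> E' \<Longrightarrow> \<iota> m i \<in> A'"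
  using \<iota>_mem unfolding free_mod_def by blast

lemma \<iota>_coeff_vanish: "m \<in> E' \<Longrightarrow> n \<le> i \<Longrightarrow> \<iota> m i = 0"
  using \<iota>_mem unfolding free_mod_def by blast

lemma \<iota>_coeff_commute: "m \<in> E' \<Longrightarrow> a \<in> A \<Longrightarrow> \<iota> m i * a = a * \<iota> m i"
  using \<iota>_coeff_mem A'_central center_modD(2) by blast

lemma E'_commute: "m \<in> E' \<Longrightarrow> a \<in> A \<Longrightarrow> m * a = a * m"
  using E'_central center_modD(2) by blast

definition unit_vec :: "nat \<Rightarrow> nat \<Rightarrow> 'b" where
  "unit_vec i = (\<lambda>j. if j = i then 1 else 0)"

definition frame :: "nat \<Rightarrow> 'b" where
  "frame i = \<pi> (unit_vec i)"

lemma unit_vec_mem: "i < n \<Longrightarrow> unit_vec i \<in> free_mod A' n"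
  unfolding free_mod_def unit_vec_def using A'.zero_mem A'.one_mem by auto

lemma frame_mem: "i < n \<Longrightarrow> frame i \<in> E'"
  unfolding frame_def by (rule \<pi>_mem[OF unit_vec_mem])

lemma \<pi>_eq_frame_sum:
  assumes v: "v \<in> free_mod A' n"
  shows "\<pi> v = (\<Sum>i<n. frame i * v i)"
proof -
  have vA': "v i \<in> A'" and v0: "n \<le> i \<Longrightarrow> v i = 0" for i
    using v unfolding free_mod_def by blast+
  let ?w = "\<lambda>k j. \<Sum>i<k. unit_vec i j * v i"
  have "?w k \<in> free_mod A' n \<and> \<pi> (?w k) = (\<Sum>i<k. frame i * v i)" if "k \<le> n" for k
    using that
  proof (induct k)
    case 0
    have zero: "(\<lambda>j. 0) \<in> free_mod A' n" unfolding free_mod_def using A'.zero_mem by auto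
    have "\<pi> (\<lambda>j. 0 * 0) = \<pi> (\<lambda>j. 0) * 0" by (rule \<pi>_mult[OF zero A'.zero_mem])
    then show ?case using zero by simp
  next
    case (Suc k)
    let ?u = "\<lambda>j. unit_vec k j * v k"
    have IH: "?w k \<in> free_mod A' n" "\<pi> (?w k) = (\<Sum>i<k. frame i * v i)"
      using Suc by auto
    have u: "?u \<in> free_mod A' n"
      unfolding free_mod_def unit_vec_def using vA' A'.zero_mem Suc(2) by auto
    have "\<pi> ?u = frame k * v k"
      unfolding frame_def by (rule \<pi>_mult[OF unit_vec_mem vA']) (use Suc(2) in simp)
    moreover have "?w (Suc k) = (\<lambda>j. ?w k j + ?u j)" by simp
    moreover have "(\<lambda>j. ?w k j + ?u j) \<in> free_mod A' n"
      using IH(1) u A'.add_mem unfolding free_mod_def by auto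
    ultimately show ?case using \<pi>_add[OF IH(1) u] IH(2) by simp
  qed
  moreover have "?w n = v"
  proof
    fix j
    have "?w n j = (\<Sum>i<n. if j = i then v i else 0)"
      unfolding unit_vec_def by (rule sum.cong) auto
    then show "?w n j = v j" using v0[of j] by auto
  qed
  ultimately show ?thesis by (metis order_refl)
qed

lemma E'_eq_frame_sum: "m \<in> E' \<Longrightarrow> m = (\<Sum>i<n. frame i * \<iota> m i)"
  using \<pi>_eq_frame_sum[OF \<iota>_mem] \<pi>_\<iota> by metis

lemma mult_eval_mem: "f \<in> free_ab E' A \<Longrightarrow> mult_eval f \<in> E"
  unfolding mult_eval_def
proof (rule sum_mem_E)
  assume f: "f \<in> free_ab E' A"
  then show "finite {p. f p \<noteq> 0}" using free_ab_finite_support finite_support_def by blast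
  show "\<forall>p\<in>{p. f p \<noteq> 0}. of_int (f p) * (fst p * snd p) \<in> E"
  proof
    fix p assume "p \<in> {p. f p \<noteq> 0}"
    then have "fst p \<in> E'" "of_int (f p) * snd p \<in> A"
      using free_ab_mem[OF f] A.of_int_mult_mem by auto
    then show "of_int (f p) * (fst p * snd p) \<in> E"
      using base_change_iso unfolding mult_tensor_iso_def by (simp add: of_int_mult_left_commute)
  qed
qed

definition tensor_rep :: "'b \<Rightarrow> 'b \<times> 'b \<Rightarrow> int" where
  "tensor_rep x = (SOME f. f \<in> free_ab E' A \<and> mult_eval f = x)"

lemma tensor_rep_spec:
  assumes "x \<in> E"
  shows "tensor_rep x \<in> free_ab E' A" and "mult_eval (tensor_rep x) = x"
proof -
  have "\<exists>f. f \<in> free_ab E' A \<and> mult_eval f = x"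
    using base_change_iso assms unfolding mult_tensor_iso_def by blast
  then show "tensor_rep x \<in> free_ab E' A" "mult_eval (tensor_rep x) = x"
    unfolding tensor_rep_def by (metis (mono_tags, lifting) someI_ex)+
qed

text \<open>The coordinate \<open>\<phi>\<^sub>i\<close> of the header: \<open>coord_of i\<close> is \<open>m \<otimes> a \<mapsto> \<iota>(m)\<^sub>i a\<close> on formal sums, and
  \<open>coord i\<close> evaluates it on an arbitrary preimage under multiplication.\<close>
definition coord_of :: "nat \<Rightarrow> ('b \<times> 'b \<Rightarrow> int) \<Rightarrow> 'b" where
  "coord_of i f = int_comb (\<lambda>p. \<iota> (fst p) i * snd p) f"

definition coord :: "nat \<Rightarrow> 'b \<Rightarrow> 'b" where
  "coord i x = coord_of i (tensor_rep x)"

lemma coord_of_tensor_rel: "f \<in> tensor_rel A' E' A \<Longrightarrow> coord_of i f = 0"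
  unfolding coord_of_def
proof (rule int_comb_tensor_rel)
  fix m m' a assume "m \<in> E'" "m' \<in> E'"
  then show "\<iota> (fst (m + m', a)) i * snd (m + m', a)
      = \<iota> (fst (m, a)) i * snd (m, a) + \<iota> (fst (m', a)) i * snd (m', a)"
    by (simp add: \<iota>_add distrib_right)
next
  fix m r a assume "m \<in> E'" "r \<in> A'"
  then show "\<iota> (fst (m * r, a)) i * snd (m * r, a) = \<iota> (fst (m, r * a)) i * snd (m, r * a)"
    by (simp add: \<iota>_mult mult.assoc)
qed (simp_all add: distrib_left)

lemma coord_mult_eval:
  assumes f: "f \<in> free_ab E' A"
  shows "coord i (mult_eval f) = coord_of i f"
proof -
  define g where "g = tensor_rep (mult_eval f)"
  have g: "g \<in> free_ab E' A" "mult_eval g = mult_eval f"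
    using tensor_rep_spec[OF mult_eval_mem[OF f]] unfolding g_def by auto
  have supp: "finite_support g" "finite_support f"
    using free_ab_finite_support g(1) f by blast+
  have "mult_eval (\<lambda>q. g q - f q) = 0"
    using g(2) by (simp add: mult_eval_eq_int_comb int_comb_diff[OF supp])
  then have "(\<lambda>q. g q - f q) \<in> tensor_rel A' E' A"
    using base_change_iso free_ab_diff[OF g(1) f] unfolding mult_tensor_iso_def by blast
  then have "coord_of i (\<lambda>q. g q - f q) = 0" by (rule coord_of_tensor_rel)
  then show ?thesis unfolding coord_def g_def[symmetric] coord_of_def int_comb_diff[OF supp] by simp
qed

lemma coord_int_comb:
  assumes f: "f \<in> free_ab E' A"
    and h: "\<And>p. fst p \<in> E' \<Longrightarrow> snd p \<in> A \<Longrightarrow> fst (h p) \<in> E' \<and> snd (h p) \<in> A"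
  shows "coord i (int_comb (\<lambda>p. fst (h p) * snd (h p)) f) = int_comb (\<lambda>p. \<iota> (fst (h p)) i * snd (h p)) f"
proof -
  let ?F = "\<lambda>q. \<Sum>p\<in>{p. f p \<noteq> 0}. f p * delta (h p) q"
  have supp: "finite_support f" by (rule free_ab_finite_support[OF f])
  have "?F \<in> free_ab E' A" by (rule free_ab_push[OF f h])
  from coord_mult_eval[OF this, of i] show ?thesis
    unfolding mult_eval_eq_int_comb coord_of_def int_comb_push[OF supp] .
qed

lemma coord_mult_right:
  assumes x: "x \<in> E" and a: "a \<in> A"
  shows "coord i (x * a) = coord i x * a"
proof -
  note f = tensor_rep_spec[OF x]
  have "x * a = int_comb (\<lambda>p. fst p * (snd p * a)) (tensor_rep x)"
    using f(2) by (simp add: mult_eval_eq_int_comb mult.assoc[symmetric] int_comb_mult_right)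
  also have "coord i \<dots> = int_comb (\<lambda>p. \<iota> (fst p) i * (snd p * a)) (tensor_rep x)"
    using coord_int_comb[OF f(1), of "\<lambda>p. (fst p, snd p * a)"] A.mult_mem a by simp
  also have "\<dots> = coord i x * a"
    unfolding coord_def coord_of_def by (simp add: mult.assoc[symmetric] int_comb_mult_right)
  finally show ?thesis .
qed

lemma coord_mult_left:
  assumes x: "x \<in> E" and a: "a \<in> A"
  shows "coord i (a * x) = a * coord i x"
proof -
  note f = tensor_rep_spec[OF x]
  have mem: "tensor_rep x p \<noteq> 0 \<Longrightarrow> fst p \<in> E'" for p using free_ab_mem[OF f(1)] by blast
  have "a * x = int_comb (\<lambda>p. a * (fst p * snd p)) (tensor_rep x)"
    using f(2) by (simp add: mult_eval_eq_int_comb int_comb_mult_left)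
  also have "\<dots> = int_comb (\<lambda>p. fst p * (a * snd p)) (tensor_rep x)"
    by (rule int_comb_cong) (simp add: mem E'_commute[OF _ a] flip: mult.assoc)
  also have "coord i \<dots> = int_comb (\<lambda>p. \<iota> (fst p) i * (a * snd p)) (tensor_rep x)"
    using coord_int_comb[OF f(1), of "\<lambda>p. (fst p, a * snd p)"] A.mult_mem a by simp
  also have "\<dots> = int_comb (\<lambda>p. a * (\<iota> (fst p) i * snd p)) (tensor_rep x)"
    by (rule int_comb_cong) (simp add: mem \<iota>_coeff_commute[OF _ a] flip: mult.assoc)
  also have "\<dots> = a * coord i x"
    unfolding coord_def coord_of_def by (rule int_comb_mult_left)
  finally show ?thesis .
qed

lemma coord_add:
  assumes x: "x \<in> E" and y: "y \<in> E"
  shows "coord i (x + y) = coord i x + coord i y"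
proof -
  note f = tensor_rep_spec[OF x] and g = tensor_rep_spec[OF y]
  have supp: "finite_support (tensor_rep x)" "finite_support (tensor_rep y)"
    using free_ab_finite_support f(1) g(1) by blast+
  have "x + y = mult_eval (\<lambda>q. tensor_rep x q + tensor_rep y q)"
    using f(2) g(2) by (simp add: mult_eval_eq_int_comb int_comb_add[OF supp])
  then show ?thesis
    using coord_mult_eval[OF free_ab_add[OF f(1) g(1)]]
    unfolding coord_def coord_of_def int_comb_add[OF supp] by simp
qed

lemma coord_zero: "coord i 0 = 0"
  using coord_add[OF zero_mem_E zero_mem_E, of i] by simp

lemma coord_sum: "finite S \<Longrightarrow> \<forall>j\<in>S. F j \<in> E \<Longrightarrow> coord i (sum F S) = (\<Sum>j\<in>S. coord i (F j))"
proof (induct S rule: finite_induct)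
  case (insert k S)
  then show ?case by (simp add: coord_add sum_mem_E)
qed (simp add: coord_zero)

lemma coord_mem:
  assumes x: "x \<in> E"
  shows "coord i x \<in> A"
  unfolding coord_def coord_of_def int_comb_def
proof (rule A.sum_mem)
  note f = tensor_rep_spec(1)[OF x]
  show "finite {p. tensor_rep x p \<noteq> 0}"
    using free_ab_finite_support[OF f] unfolding finite_support_def .
  show "\<forall>p\<in>{p. tensor_rep x p \<noteq> 0}. of_int (tensor_rep x p) * (\<iota> (fst p) i * snd p) \<in> A"
  proof
    fix p assume "p \<in> {p. tensor_rep x p \<noteq> 0}"
    then have "fst p \<in> E'" "snd p \<in> A" using free_ab_mem[OF f] by auto
    moreover have "\<iota> (fst p) i \<in> A"
      using \<iota>_coeff_mem[OF \<open>fst p \<in> E'\<close>] A'_central center_modD(1) by blast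
    ultimately show "of_int (tensor_rep x p) * (\<iota> (fst p) i * snd p) \<in> A"
      by (simp add: A.of_int_mult_mem A.mult_mem)
  qed
qed


lemma coord_vanish:
  assumes x: "x \<in> E" and i: "n \<le> i"
  shows "coord i x = 0"
proof -
  note f = tensor_rep_spec(1)[OF x]
  have "coord i x = int_comb (\<lambda>p. 0) (tensor_rep x)"
    unfolding coord_def coord_of_def
    by (rule int_comb_cong) (use free_ab_mem[OF f] \<iota>_coeff_vanish i in auto)
  then show ?thesis by (simp add: int_comb_zero_fun)
qed

lemma frame_coord_sum:
  assumes x: "x \<in> E"
  shows "(\<Sum>i<n. frame i * coord i x) = x"
proof -
  note f = tensor_rep_spec[OF x]
  let ?S = "{p. tensor_rep x p \<noteq> 0}"
  have "(\<Sum>i<n. frame i * coord i x)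
      = (\<Sum>i<n. \<Sum>p\<in>?S. of_int (tensor_rep x p) * ((frame i * \<iota> (fst p) i) * snd p))"
    unfolding coord_def coord_of_def int_comb_def
    by (simp add: sum_distrib_left of_int_mult_left_commute mult.assoc)
  also have "\<dots> = (\<Sum>p\<in>?S. of_int (tensor_rep x p) * ((\<Sum>i<n. frame i * \<iota> (fst p) i) * snd p))"
    by (subst sum.swap) (simp add: sum_distrib_left sum_distrib_right)
  also have "\<dots> = (\<Sum>p\<in>?S. of_int (tensor_rep x p) * (fst p * snd p))"
    using free_ab_mem[OF f(1)] E'_eq_frame_sum by (intro sum.cong) auto
  also have "\<dots> = x" using f(2) unfolding mult_eval_def .
  finally show ?thesis .
qed

lemma frame_center_mod: "i < n \<Longrightarrow> frame i \<in> center_mod A E"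
  using frame_mem E'_central by blast

lemma coord_center:
  assumes x: "x \<in> center_mod A E"
  shows "coord i x \<in> center A"
proof (rule center_modI)
  show "coord i x \<in> A" by (rule coord_mem[OF center_modD(1)[OF x]])
  fix a assume "a \<in> A"
  then show "coord i x * a = a * coord i x"
    using coord_mult_right coord_mult_left center_modD[OF x] by metis
qed

lemma fg_proj_center: "fg_proj (center A) (center_mod A E)"
  unfolding fg_proj_def
proof (intro conjI exI)
  let ?\<iota> = "\<lambda>x i. coord i x" and ?\<pi> = "\<lambda>v. \<Sum>i<n. frame i * v i"
  show "submod (center A) (center_mod A E)" by (rule submod_center_mod)
  show "\<forall>x\<in>center_mod A E. ?\<iota> x \<in> free_mod (center A) n"
    unfolding free_mod_def using coord_center coord_vanish center_modD(1) by blast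
  show "\<forall>x\<in>center_mod A E. \<forall>y\<in>center_mod A E. ?\<iota> (x + y) = (\<lambda>i. ?\<iota> x i + ?\<iota> y i)"
    using coord_add center_modD(1) by blast
  show "\<forall>x\<in>center_mod A E. \<forall>r\<in>center A. ?\<iota> (x * r) = (\<lambda>i. ?\<iota> x i * r)"
    using coord_mult_right center_modD(1) by blast
  show "\<forall>v\<in>free_mod (center A) n. ?\<pi> v \<in> center_mod A E"
    unfolding free_mod_def
    by (auto intro!: center_mod_sum center_mod_mult_center frame_center_mod)
  show "\<forall>v\<in>free_mod (center A) n. \<forall>w\<in>free_mod (center A) n. ?\<pi> (\<lambda>i. v i + w i) = ?\<pi> v + ?\<pi> w"
    by (simp add: distrib_left sum.distrib)
  show "\<forall>v\<in>free_mod (center A) n. \<forall>r\<in>center A. ?\<pi> (\<lambda>i. v i * r) = ?\<pi> v * r"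
    by (simp add: sum_distrib_right mult.assoc)
  show "\<forall>x\<in>center_mod A E. ?\<pi> (?\<iota> x) = x"
    using frame_coord_sum center_modD(1) by blast
qed

abbreviation center_tensor_equiv :: "('b \<times> 'b \<Rightarrow> int) \<Rightarrow> ('b \<times> 'b \<Rightarrow> int) \<Rightarrow> bool" where
  "center_tensor_equiv \<equiv> tensor_equiv (center A) (center_mod A E) A"

lemma delta_equiv_frame_expansion:
  assumes m: "m \<in> center_mod A E" and c: "c \<in> A"
  shows "center_tensor_equiv (delta (m, c)) (\<lambda>q. \<Sum>i<n. delta (frame i, coord i (m * c)) q)"
proof -
  have mE: "m \<in> E" by (rule center_modD(1)[OF m])
  have "center_tensor_equiv (delta (\<Sum>i<n. frame i * coord i m, c))
      (\<lambda>q. \<Sum>i<n. delta (frame i * coord i m, c) q)"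
    by (rule tensor_equiv_delta_sum_left[OF finite_lessThan center_mod_zero center_mod_add _ c])
      (use center_mod_mult_center[OF frame_center_mod coord_center[OF m]] in auto)
  then have "center_tensor_equiv (delta (m, c)) (\<lambda>q. \<Sum>i<n. delta (frame i * coord i m, c) q)"
    unfolding frame_coord_sum[OF mE] .
  moreover have "center_tensor_equiv (\<lambda>q. \<Sum>i<n. delta (frame i * coord i m, c) q)
      (\<lambda>q. \<Sum>i<n. delta (frame i, coord i (m * c)) q)"
  proof (rule tensor_equiv_sum[OF finite_lessThan], rule ballI)
    fix i assume "i \<in> {..<n}"
    then show "center_tensor_equiv (delta (frame i * coord i m, c)) (delta (frame i, coord i (m * c)))"
      using tensor_equiv_balanced[OF frame_center_mod coord_center[OF m] c]
      by (simp add: coord_mult_right[OF mE c])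
  qed
  ultimately show ?thesis by (rule tensor_equiv_trans)
qed

lemma tensor_equiv_frame_expansion:
  assumes f: "f \<in> free_ab (center_mod A E) A"
  shows "center_tensor_equiv f (\<lambda>q. \<Sum>i<n. delta (frame i, coord i (mult_eval f)) q)"
proof -
  let ?S = "{p. f p \<noteq> 0}"
  define c where "c p = of_int (f p) * snd p" for p
  have fin: "finite ?S" using free_ab_finite_support[OF f] unfolding finite_support_def .
  have mem: "fst p \<in> center_mod A E" "snd p \<in> A" "c p \<in> A" if "p \<in> ?S" for p
    using free_ab_mem[OF f] that A.of_int_mult_mem unfolding c_def by auto
  have coord_mem': "coord i (fst p * c p) \<in> A" if "p \<in> ?S" for p i
    using coord_mem mult_right_mem_E center_modD(1) mem[OF that] by blast
  have expand: "f = (\<lambda>q. \<Sum>p\<in>?S. f p * delta p q)"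
  proof
    fix q
    have "(\<Sum>p\<in>?S. f p * delta p q) = (\<Sum>p\<in>?S. if p = q then f q else 0)"
      by (rule sum.cong) (auto simp: delta_def)
    then show "f q = (\<Sum>p\<in>?S. f p * delta p q)" using fin by simp
  qed
  have scale: "center_tensor_equiv (\<lambda>q. \<Sum>p\<in>?S. f p * delta p q) (\<lambda>q. \<Sum>p\<in>?S. delta (fst p, c p) q)"
  proof (rule tensor_equiv_sum[OF fin], rule ballI)
    fix p assume p: "p \<in> ?S"
    have "center_tensor_equiv (\<lambda>q. f p * delta (fst p, snd p) q) (delta (fst p, c p))"
      unfolding c_def by (rule tensor_equiv_delta_int_scale[OF mem(1)[OF p] A.of_int_mult_mem[OF mem(2)[OF p]]])
    then show "center_tensor_equiv (\<lambda>q. f p * delta p q) (delta (fst p, c p))" by simp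
  qed
  have expand_first: "center_tensor_equiv (\<lambda>q. \<Sum>p\<in>?S. delta (fst p, c p) q)
      (\<lambda>q. \<Sum>p\<in>?S. \<Sum>i<n. delta (frame i, coord i (fst p * c p)) q)"
  proof (rule tensor_equiv_sum[OF fin], rule ballI)
    fix p assume "p \<in> ?S"
    then show "center_tensor_equiv (delta (fst p, c p))
        (\<lambda>q. \<Sum>i<n. delta (frame i, coord i (fst p * c p)) q)"
      by (intro delta_equiv_frame_expansion mem)
  qed
  have swap: "(\<lambda>q. \<Sum>p\<in>?S. \<Sum>i<n. delta (frame i, coord i (fst p * c p)) q)
      = (\<lambda>q. \<Sum>i<n. \<Sum>p\<in>?S. delta (frame i, coord i (fst p * c p)) q)"
    by (rule ext, rule sum.swap)
  have collect: "center_tensor_equiv (\<lambda>q. \<Sum>i<n. \<Sum>p\<in>?S. delta (frame i, coord i (fst p * c p)) q)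
      (\<lambda>q. \<Sum>i<n. delta (frame i, \<Sum>p\<in>?S. coord i (fst p * c p)) q)"
  proof (rule tensor_equiv_sum[OF finite_lessThan], rule ballI)
    fix i assume "i \<in> {..<n}"
    then have "center_tensor_equiv (delta (frame i, \<Sum>p\<in>?S. coord i (fst p * c p)))
        (\<lambda>q. \<Sum>p\<in>?S. delta (frame i, coord i (fst p * c p)) q)"
      using coord_mem' frame_center_mod
      by (intro tensor_equiv_delta_sum_right[OF fin A.zero_mem A.add_mem]) auto
    then show "center_tensor_equiv (\<lambda>q. \<Sum>p\<in>?S. delta (frame i, coord i (fst p * c p)) q)
        (delta (frame i, \<Sum>p\<in>?S. coord i (fst p * c p)))"
      by (rule tensor_equiv_sym)
  qed
  have coord_sum_eq: "(\<Sum>p\<in>?S. coord i (fst p * c p)) = coord i (mult_eval f)" for i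
  proof -
    have "(\<Sum>p\<in>?S. coord i (fst p * c p)) = coord i (\<Sum>p\<in>?S. fst p * c p)"
      using mult_right_mem_E[OF center_modD(1)[OF mem(1)] mem(3)] by (intro coord_sum[symmetric] fin) blast
    also have "(\<Sum>p\<in>?S. fst p * c p) = mult_eval f"
      unfolding mult_eval_def c_def by (simp add: of_int_mult_left_commute)
    finally show ?thesis .
  qed
  have "center_tensor_equiv (\<lambda>q. \<Sum>p\<in>?S. f p * delta p q)
      (\<lambda>q. \<Sum>i<n. delta (frame i, coord i (mult_eval f)) q)"
    using tensor_equiv_trans[OF tensor_equiv_trans[OF scale expand_first[unfolded swap]] collect]
    unfolding coord_sum_eq .
  then show ?thesis unfolding expand[symmetric] .
qed

lemma mult_tensor_iso_center: "mult_tensor_iso (center A) (center_mod A E) A E"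
  unfolding mult_tensor_iso_def
proof (intro conjI ballI impI)
  fix m a assume "m \<in> center_mod A E" "a \<in> A"
  then show "m * a \<in> E" using mult_right_mem_E center_modD(1) by blast
next
  fix x assume x: "x \<in> E"
  let ?f = "\<lambda>q. \<Sum>i<n. 1 * delta (frame i, coord i x) q"
  have "?f \<in> free_ab (center_mod A E) A"
  proof (rule free_abI)
    show "finite_support ?f" by (rule finite_support_delta_comb) simp
    fix q assume "?f q \<noteq> 0"
    then obtain i where "i \<in> {..<n}" "q = (frame i, coord i x)" by (rule delta_comb_nonzero)
    then show "fst q \<in> center_mod A E \<and> snd q \<in> A"
      using frame_center_mod coord_mem[OF x] by simp
  qed
  moreover have "mult_eval ?f = x"
    using frame_coord_sum[OF x]
    unfolding mult_eval_eq_int_comb int_comb_delta_comb[OF finite_lessThan] by simp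
  ultimately show "\<exists>f\<in>free_ab (center_mod A E) A. mult_eval f = x" by blast
next
  fix f assume f: "f \<in> free_ab (center_mod A E) A" and "mult_eval f = 0"
  then have "center_tensor_equiv f (\<lambda>q. \<Sum>i<n. delta (frame i, 0) q)"
    using tensor_equiv_frame_expansion[OF f] by (simp add: coord_zero)
  moreover have "(\<lambda>q. \<Sum>i<n. delta (frame i, 0) q) \<in> tensor_rel (center A) (center_mod A E) A"
    using frame_center_mod A.zero_mem
    by (intro tensor_rel_sum ballI tensor_rel_delta_zero_right) auto
  ultimately show "f \<in> tensor_rel (center A) (center_mod A E) A"
    unfolding tensor_rel_iff_equiv_zero by (rule tensor_equiv_trans)
qed

lemma assumption_III: "assumption_III A E"
  unfolding assumption_III_def using fg_proj_center mult_tensor_iso_center by blast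

end

lemma assumption_III_imp_III':
  assumes "cstar_alg sc st" "unital_star_subalg sc st A" "assumption_III A E"
  shows "assumption_III' sc st A E"
  using assms center_unital_star_subalg[OF assms(1,2)]
  unfolding assumption_III_def assumption_III'_def fg_proj_def by blast

lemma assumption_III'_imp_III:
  assumes cs: "cstar_alg sc st" and E: "right_submodule A E" and III': "assumption_III' sc st A E"
  shows "assumption_III A E"
proof -
  obtain A' E' where A': "unital_star_subalg sc st A'" "A' \<subseteq> center A"
    and E': "E' \<subseteq> center_mod A E" "fg_proj A' E'" "mult_tensor_iso A' E' A E"
    using III' unfolding assumption_III'_def by blast
  from E'(2) obtain n \<iota> \<pi> where
        "\<forall>x\<in>E'. \<iota> x \<in> free_mod A' n"
    and "\<forall>x\<in>E'. \<forall>y\<in>E'. \<iota> (x + y) = (\<lambda>i. \<iota> x i + \<iota> y i)"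
    and "\<forall>x\<in>E'. \<forall>r\<in>A'. \<iota> (x * r) = (\<lambda>i. \<iota> x i * r)"
    and "\<forall>v\<in>free_mod A' n. \<pi> v \<in> E'"
    and "\<forall>v\<in>free_mod A' n. \<forall>w\<in>free_mod A' n. \<pi> (\<lambda>i. v i + w i) = \<pi> v + \<pi> w"
    and "\<forall>v\<in>free_mod A' n. \<forall>r\<in>A'. \<pi> (\<lambda>i. v i * r) = \<pi> v * r"
    and "\<forall>x\<in>E'. \<pi> (\<iota> x) = x"
    unfolding fg_proj_def by blast
  then interpret central_base_change A E A' E' n \<iota> \<pi>
    using E unital_star_subalg_subring[OF cs A'(1)] A'(2) E'(1,3)
    by (intro central_base_change.intro central_base_change_axioms.intro) simp_all
  show ?thesis by (rule assumption_III)
qed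

theorem proposition4p17:
  fixes sc :: "complex \<Rightarrow> 'b::ring_1" and st :: "'b \<Rightarrow> 'b"
    and A :: "'b set" and d :: "'b \<Rightarrow> 'b"
  assumes "cstar_alg sc st"
    and "unital_star_subalg sc st A"
    and "derivation_on sc A d"
  shows "assumption_III A (one_forms sc A d) \<longleftrightarrow> assumption_III' sc st A (one_forms sc A d)"
  using assumption_III_imp_III'[OF assms(1,2)]
    assumption_III'_imp_III[OF assms(1) one_forms_right_submodule[OF assms]]
  by blast

end
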